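(* Let $1\le d<n$, $r=d(n-d)$, and let $\mathfrak C$ be a maximal chain in $I(d,n)$. (i) If $F_t(\mathfrak C)=0$ for each $1\le t\le r-1$, then $\mathfrak C=\mathfrak C_{\mathrm{left}}$. (ii) There exist $t_1,\dots,t_k$ such that $F_{t_1}F_{t_2}\cdots F_{t_k}(\mathfrak C)=\mathfrak C_{\mathrm{left}}$. (iii) If $E_t(\mathfrak C)=0$ for each $1\le t\le r-1$, then $\mathfrak C=\mathfrak C_{\mathrm{right}}$. (iv) There exist $t_1,\dots,t_k$ such that $E_{t_1}E_{t_2}\cdots E_{t_k}(\mathfrak C)=\mathfrak C_{\mathrm{right}}$.
   Context: $I(d,n)$: $d$-subsets of $\{1,\dots,n\}$ as increasing sequences, ordered by $\underline i\le\underline j$ iff $i_k\le j_k$ for all $k$. Maximal chains $\underline i_r>\cdots>\underline i_0$ are compared lexicographically via concatenated strings; $\mathfrak C_{\mathrm{right}}$ is the smallest and $\mathfrak C_{\mathrm{left}}$ the largest. For $1\le t\le r-1$: if the Bruhat interval $[\underline i_{t-1},\underline i_{t+1}]$ has 4 elements $\{\underline i_{t-1},\underline i_t,\underline i'_t,\underline i_{t+1}\}$, then $\underline i_t$ is a right peak if $\underline i'_t>_{lex}\underline i_t$ and a left peak if $\underline i_t>_{lex}\underline i'_t$. $F_t(\mathfrak C)$ (resp. $E_t(\mathfrak C)$) is the chain obtained by replacing $\underline i_t$ by $\underline i'_t$ if $\underline i_t$ is a right (resp. left) peak, and $0$ otherwise; $F_t(0)=E_t(0)=0$. *)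

theory Defs
  imports Main
begin

text \<open>Elements of I(d,n): d-subsets of {1..n} as strictly increasing lists.\<close>
definition Idn :: "nat \<Rightarrow> nat \<Rightarrow> nat list set" where
  "Idn d n = {xs. length xs = d \<and> sorted_wrt (<) xs \<and> set xs \<subseteq> {1..n}}"

definition bru_le :: "nat list \<Rightarrow> nat list \<Rightarrow> bool" where
  "bru_le xs ys \<longleftrightarrow> list_all2 (\<le>) xs ys"

definition bru_less :: "nat list \<Rightarrow> nat list \<Rightarrow> bool" where
  "bru_less xs ys \<longleftrightarrow> bru_le xs ys \<and> xs \<noteq> ys"

text \<open>A maximal chain, listed increasingly: ch ! t is i_t, so ch = [i_0, ..., i_r].
  Its underlying set is a chain of I(d,n) not contained in any larger chain.\<close>
definition max_chain :: "nat \<Rightarrow> nat \<Rightarrow> nat list list \<Rightarrow> bool" where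
  "max_chain d n ch \<longleftrightarrow>
     set ch \<subseteq> Idn d n \<and> sorted_wrt bru_less ch \<and>
     (\<forall>x\<in>Idn d n. (\<forall>y\<in>set ch. bru_le x y \<or> bru_le y x) \<longrightarrow> x \<in> set ch)"

definition bru_interval :: "nat \<Rightarrow> nat \<Rightarrow> nat list \<Rightarrow> nat list \<Rightarrow> nat list set" where
  "bru_interval d n a b = {x \<in> Idn d n. bru_le a x \<and> bru_le x b}"

definition lex_less :: "nat list \<Rightarrow> nat list \<Rightarrow> bool" where
  "lex_less xs ys \<longleftrightarrow> (xs, ys) \<in> lexord {(a, b). a < b}"

definition chain_string :: "nat list list \<Rightarrow> nat list" where
  "chain_string ch = concat (rev ch)"

text \<open>The fourth element i'_t of the interval [i_{t-1}, i_{t+1}].\<close>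
definition other_elt :: "nat \<Rightarrow> nat \<Rightarrow> nat list list \<Rightarrow> nat \<Rightarrow> nat list" where
  "other_elt d n ch t = (THE x. x \<in> bru_interval d n (ch ! (t - 1)) (ch ! (t + 1)) \<and>
                              x \<notin> {ch ! (t - 1), ch ! t, ch ! (t + 1)})"

definition has_diamond :: "nat \<Rightarrow> nat \<Rightarrow> nat list list \<Rightarrow> nat \<Rightarrow> bool" where
  "has_diamond d n ch t \<longleftrightarrow> 1 \<le> t \<and> t + 1 < length ch \<and>
     card (bru_interval d n (ch ! (t - 1)) (ch ! (t + 1))) = 4"

definition right_peak :: "nat \<Rightarrow> nat \<Rightarrow> nat list list \<Rightarrow> nat \<Rightarrow> bool" where
  "right_peak d n ch t \<longleftrightarrow> has_diamond d n ch t \<and> lex_less (ch ! t) (other_elt d n ch t)"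

definition left_peak :: "nat \<Rightarrow> nat \<Rightarrow> nat list list \<Rightarrow> nat \<Rightarrow> bool" where
  "left_peak d n ch t \<longleftrightarrow> has_diamond d n ch t \<and> lex_less (other_elt d n ch t) (ch ! t)"

text \<open>Operators F_t, E_t; None plays the role of 0.\<close>
fun F_op :: "nat \<Rightarrow> nat \<Rightarrow> nat \<Rightarrow> nat list list option \<Rightarrow> nat list list option" where
  "F_op d n t None = None"
| "F_op d n t (Some ch) =
     (if right_peak d n ch t then Some (ch[t := other_elt d n ch t]) else None)"

fun E_op :: "nat \<Rightarrow> nat \<Rightarrow> nat \<Rightarrow> nat list list option \<Rightarrow> nat list list option" where
  "E_op d n t None = None"
| "E_op d n t (Some ch) =
     (if left_peak d n ch t then Some (ch[t := other_elt d n ch t]) else None)"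

definition C_left :: "nat \<Rightarrow> nat \<Rightarrow> nat list list" where
  "C_left d n = (THE ch. max_chain d n ch \<and>
     (\<forall>ch'. max_chain d n ch' \<and> ch' \<noteq> ch \<longrightarrow> lex_less (chain_string ch') (chain_string ch)))"

definition C_right :: "nat \<Rightarrow> nat \<Rightarrow> nat list list" where
  "C_right d n = (THE ch. max_chain d n ch \<and>
     (\<forall>ch'. max_chain d n ch' \<and> ch' \<noteq> ch \<longrightarrow> lex_less (chain_string ch) (chain_string ch')))"

end

theory Submission
  imports Defs "HOL-Library.List_Lexorder"
begin

text \<open>Consecutive elements of a maximal chain differ by raising one coordinate by one. A
  diamond at t means that the two steps into i_{t+1} can be taken in the opposite order, and
  i_t is then a right peak iff the later step raises a coordinate further left than the earlier
  one. Hence a chain without right peaks, read downwards, always lowers the rightmost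
  coordinate that can be lowered, and a chain without left peaks the leftmost one; either kind
  of chain is therefore unique. Replacing a right (left) peak strictly increases (decreases)
  the concatenated string, so the lexicographically largest chain has no right peak and the
  smallest one no left peak, which gives (i) and (iii). For (ii) and (iv), apply F_t (E_t) at
  peaks until none is left; this terminates as there are only finitely many chains.\<close>

lemma list_eq_by_backward_recursion:
  assumes len: "length xs = length ys" and last: "xs!(length xs - 1) = ys!(length ys - 1)"
    and xs: "\<And>t. t + 1 < length xs \<Longrightarrow> xs!t = f (xs!(t+1))"
    and ys: "\<And>t. t + 1 < length ys \<Longrightarrow> ys!t = f (ys!(t+1))"
  shows "xs = ys"
proof (rule nth_equalityI)
  fix i assume "i < length xs"
  then have "i \<le> length xs - 1" by simp
  then show "xs!i = ys!i"
  proof (induction i rule: inc_induct)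
    case base
    show ?case using last len by simp
  next
    case (step i)
    then show ?case using xs[of i] ys[of i] len by simp
  qed
qed (rule len)

lemma sorted_wrt_list_update:
  assumes "transp R" "sorted_wrt R xs" "t < length xs"
    and "0 < t \<Longrightarrow> R (xs!(t-1)) x" "t + 1 < length xs \<Longrightarrow> R x (xs!(t+1))"
  shows "sorted_wrt R (xs[t := x])"
  unfolding sorted_wrt_iff_nth_less
proof (intro allI impI)
  fix i j assume ij: "i < j" "j < length (xs[t := x])"
  have xs: "R (xs!i) (xs!j)" if "i < j" "j < length xs" for i j
    using assms(2) that unfolding sorted_wrt_iff_nth_less by blast
  have xs_le: "R (xs!i) (xs!j) \<or> xs!i = xs!j" if "i \<le> j" "j < length xs" for i j
    using xs that le_neq_implies_less by blast
  consider "i = t" | "j = t" | "i \<noteq> t" "j \<noteq> t" using ij by blast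
  then show "R (xs[t := x] ! i) (xs[t := x] ! j)"
  proof cases
    case 1
    then show ?thesis using ij assms(1,5) xs_le[of "t+1" j] by (auto dest: transpD)
  next
    case 2
    then have "i \<le> t - 1" "0 < t" using ij by auto
    then have "R (xs!i) (xs!(t-1)) \<or> xs!i = xs!(t-1)" "R (xs!(t-1)) x"
      using xs_le[of i "t-1"] assms(3,4) by auto
    then have "R (xs!i) x" using transpD[OF assms(1)] by metis
    then show ?thesis using 2 ij by simp
  qed (use ij xs in simp)
qed

lemma ex1_greatest_key:
  fixes g :: "'a \<Rightarrow> 'b::linorder"
  assumes "finite S" "S \<noteq> {}" "inj_on g S"
  shows "\<exists>!c. c \<in> S \<and> (\<forall>c'. c' \<in> S \<and> c' \<noteq> c \<longrightarrow> g c' < g c)"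
proof -
  obtain c where c: "c \<in> S" "g c = Max (g ` S)" using Max_in[of "g ` S"] assms(1,2)
    by (metis (mono_tags) finite_imageI image_iff image_is_empty)
  have "g c' < g c" if "c' \<in> S" "c' \<noteq> c" for c'
    using that c Max_ge[of "g ` S" "g c'"] assms(1,3) inj_onD[OF assms(3)]
    by (fastforce simp: order.order_iff_strict)
  with c show ?thesis by (metis order.asym)
qed

lemma ex1_least_key:
  fixes g :: "'a \<Rightarrow> 'b::linorder"
  assumes "finite S" "S \<noteq> {}" "inj_on g S"
  shows "\<exists>!c. c \<in> S \<and> (\<forall>c'. c' \<in> S \<and> c' \<noteq> c \<longrightarrow> g c < g c')"
proof -
  obtain c where c: "c \<in> S" "g c = Min (g ` S)" using Min_in[of "g ` S"] assms(1,2)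
    by (metis (mono_tags) finite_imageI image_iff image_is_empty)
  have "g c < g c'" if "c' \<in> S" "c' \<noteq> c" for c'
    using that c Min_le[of "g ` S" "g c'"] assms(1,3) inj_onD[OF assms(3)]
    by (fastforce simp: order.order_iff_strict)
  with c show ?thesis by (metis order.asym)
qed

lemma foldr_reaches_sink:
  fixes f :: "'i \<Rightarrow> 'a option \<Rightarrow> 'a option" and h :: "'a \<Rightarrow> nat"
  assumes step: "\<And>x t y. P x \<Longrightarrow> f t (Some x) = Some y \<Longrightarrow> P y \<and> h y < h x"
    and sink: "\<And>x. P x \<Longrightarrow> (\<And>t. f t (Some x) = None) \<Longrightarrow> x = c"
    and "P x"
  shows "\<exists>ts. foldr f ts (Some x) = Some c"
  using \<open>P x\<close>
proof (induction x rule: measure_induct_rule[of h])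
  case (less x)
  show ?case
  proof (cases "\<forall>t. f t (Some x) = None")
    case True
    then have "foldr f [] (Some x) = Some c" using sink[OF less.prems] by simp
    then show ?thesis ..
  next
    case False
    then obtain t y where y: "f t (Some x) = Some y" by fastforce
    then obtain ts where "foldr f ts (Some y) = Some c" using less step[OF less.prems] by blast
    then have "foldr f (ts @ [t]) (Some x) = Some c" using y by simp
    then show ?thesis ..
  qed
qed

section \<open>The poset I(d,n)\<close>

lemma Idn_iff_nth:
  "xs \<in> Idn d n \<longleftrightarrow> length xs = d \<and> (\<forall>i<d. 1 \<le> xs!i \<and> xs!i \<le> n) \<and> (\<forall>i. Suc i < d \<longrightarrow> xs!i < xs!Suc i)"
proof -
  have "sorted_wrt (<) xs \<longleftrightarrow> (\<forall>i. Suc i < length xs \<longrightarrow> xs!i < xs!Suc i)"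
    by (rule sorted_wrt_iff_nth_Suc_transp) (auto simp: transp_def)
  moreover have "set xs \<subseteq> {1..n} \<longleftrightarrow> (\<forall>i<length xs. 1 \<le> xs!i \<and> xs!i \<le> n)"
    by (auto simp: in_set_conv_nth subset_iff)
  ultimately show ?thesis unfolding Idn_def by auto
qed

lemma finite_Idn: "finite (Idn d n)"
proof (rule finite_subset)
  show "Idn d n \<subseteq> {xs. set xs \<subseteq> {1..n} \<and> length xs = d}" unfolding Idn_def
    by auto
qed (rule finite_lists_length_eq, simp)

lemma Idn_nth_add_le:
  assumes "xs \<in> Idn d n" "i \<le> j" "j < d"
  shows "xs!i + (j - i) \<le> xs!j"
  using assms(2,3)
proof (induction j rule: dec_induct)
  case (step j)
  then have "xs!j < xs!Suc j" using assms(1) unfolding Idn_iff_nth by auto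
  with step show ?case by simp
qed simp

lemma Idn_nth_lower:
  assumes "xs \<in> Idn d n" "i < d"
  shows "Suc i \<le> xs!i"
proof -
  have "xs!0 + i \<le> xs!i" using Idn_nth_add_le[OF assms(1), of 0 i] assms(2) by simp
  moreover have "1 \<le> xs!0" using assms unfolding Idn_iff_nth by auto
  ultimately show ?thesis by linarith
qed

lemma Idn_nth_upper:
  assumes "xs \<in> Idn d n" "i < d"
  shows "xs!i + (d - Suc i) \<le> n"
proof -
  have "xs!i + (d - 1 - i) \<le> xs!(d - 1)" using Idn_nth_add_le[OF assms(1), of i "d - 1"] assms(2)
    by simp
  moreover have "xs!(d - 1) \<le> n" using assms unfolding Idn_iff_nth by auto
  ultimately show ?thesis by simp
qed

lemma bru_le_iff_nth: "bru_le xs ys \<longleftrightarrow> length xs = length ys \<and> (\<forall>i<length xs. xs!i \<le> ys!i)"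
  by (simp add: bru_le_def list_all2_conv_all_nth)

lemma bru_le_refl [simp]: "bru_le xs xs"
  by (simp add: bru_le_iff_nth)

lemma bru_le_trans: "bru_le xs ys \<Longrightarrow> bru_le ys zs \<Longrightarrow> bru_le xs zs"
  unfolding bru_le_iff_nth by (metis le_trans)

lemma bru_le_antisym: "bru_le xs ys \<Longrightarrow> bru_le ys xs \<Longrightarrow> xs = ys"
  unfolding bru_le_def by (metis list_all2_antisym antisym)

lemma transp_bru_less: "transp bru_less"
  unfolding bru_less_def transp_def using bru_le_trans bru_le_antisym by blast

definition Idn_bot :: "nat \<Rightarrow> nat list" where
  "Idn_bot d = map Suc [0..<d]"

definition Idn_top :: "nat \<Rightarrow> nat \<Rightarrow> nat list" where
  "Idn_top d n = map (\<lambda>i. i + (n - d)) (Idn_bot d)"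

lemma Idn_bot_in_Idn: "d \<le> n \<Longrightarrow> Idn_bot d \<in> Idn d n"
  by (auto simp: Idn_iff_nth Idn_bot_def)

lemma Idn_top_in_Idn: "d \<le> n \<Longrightarrow> Idn_top d n \<in> Idn d n"
  by (auto simp: Idn_iff_nth Idn_top_def Idn_bot_def)

lemma Idn_bot_least: "xs \<in> Idn d n \<Longrightarrow> bru_le (Idn_bot d) xs"
  using Idn_nth_lower[of xs d n] by (auto simp: bru_le_iff_nth Idn_bot_def Idn_iff_nth)

lemma Idn_top_greatest: "xs \<in> Idn d n \<Longrightarrow> bru_le xs (Idn_top d n)"
  using Idn_nth_upper[of xs d n] by (fastforce simp: bru_le_iff_nth Idn_top_def Idn_bot_def Idn_iff_nth)

lemma sum_list_Idn_top: "sum_list (Idn_top d n) = sum_list (Idn_bot d) + d * (n - d)"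
proof -
  have "sum_list (map (\<lambda>i. i + c) xs) = sum_list xs + length xs * c" for xs :: "nat list" and c
    by (induction xs) auto
  then have "sum_list (Idn_top d n) = sum_list (Idn_bot d) + length (Idn_bot d) * (n - d)"
    unfolding Idn_top_def .
  then show ?thesis by (simp add: Idn_bot_def)
qed

definition inc_at :: "nat list \<Rightarrow> nat \<Rightarrow> nat list" where
  "inc_at xs k = xs[k := xs!k + 1]"

definition dec_at :: "nat list \<Rightarrow> nat \<Rightarrow> nat list" where
  "dec_at xs k = xs[k := xs!k - 1]"

lemma dec_at_inc_at [simp]: "dec_at (inc_at xs k) k = xs"
  by (cases "k < length xs") (auto simp: inc_at_def dec_at_def list_update_beyond)

lemma length_dec_at [simp]: "length (dec_at xs k) = length xs"
  by (simp add: dec_at_def)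

lemma nth_dec_at: "k < length xs \<Longrightarrow> dec_at xs k ! i = (if i = k then xs!k - 1 else xs!i)"
  by (simp add: dec_at_def)

lemma bru_le_dec_at: "bru_le (dec_at xs k) xs"
  by (cases "k < length xs") (auto simp: bru_le_iff_nth dec_at_def nth_list_update list_update_beyond)

lemma dec_at_commute: "p \<noteq> q \<Longrightarrow> dec_at (dec_at y p) q = dec_at (dec_at y q) p"
  by (simp add: dec_at_def list_update_swap)

lemma sum_list_inc_at: "k < length xs \<Longrightarrow> sum_list (inc_at xs k) = sum_list xs + 1"
  by (simp add: inc_at_def sum_list_update)

lemma bru_le_inc_at: "bru_le xs (inc_at xs k)"
  by (cases "k < length xs") (auto simp: bru_le_iff_nth inc_at_def nth_list_update list_update_beyond)

section \<open>Maximal chains as sequences of unit steps\<close>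

lemma max_chain_nth_in_Idn: "max_chain d n ch \<Longrightarrow> i < length ch \<Longrightarrow> ch!i \<in> Idn d n"
  unfolding max_chain_def by auto

lemma max_chain_nth_less: "max_chain d n ch \<Longrightarrow> i < j \<Longrightarrow> j < length ch \<Longrightarrow> bru_less (ch!i) (ch!j)"
  unfolding max_chain_def using sorted_wrt_nth_less by blast

lemma max_chain_nth_le: "max_chain d n ch \<Longrightarrow> i \<le> j \<Longrightarrow> j < length ch \<Longrightarrow> bru_le (ch!i) (ch!j)"
  using max_chain_nth_less[of d n ch i j] by (cases "i = j") (auto simp: bru_less_def)

lemma max_chain_maximal:
  "max_chain d n ch \<Longrightarrow> x \<in> Idn d n \<Longrightarrow>
   (\<And>j. j < length ch \<Longrightarrow> bru_le x (ch!j) \<or> bru_le (ch!j) x) \<Longrightarrow> \<exists>j<length ch. x = ch!j"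
  unfolding max_chain_def by (metis in_set_conv_nth)

lemma max_chain_first:
  assumes mc: "max_chain d n ch" and "d \<le> n"
  shows "ch \<noteq> [] \<and> ch!0 = Idn_bot d"
proof -
  obtain j where j: "j < length ch" "Idn_bot d = ch!j"
    using max_chain_maximal[OF mc Idn_bot_in_Idn[OF \<open>d \<le> n\<close>]] Idn_bot_least
      max_chain_nth_in_Idn[OF mc] by blast
  have "0 < length ch" using j(1) by linarith
  then have le: "bru_le (ch!j) (ch!0)" using j Idn_bot_least[OF max_chain_nth_in_Idn[OF mc]] by simp
  have "j = 0"
  proof (rule ccontr)
    assume "j \<noteq> 0"
    then have "bru_less (ch!0) (ch!j)" using max_chain_nth_less[OF mc] j by simp
    with le show False unfolding bru_less_def using bru_le_antisym by blast
  qed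
  then show ?thesis using j by auto
qed

lemma max_chain_last:
  assumes mc: "max_chain d n ch" and "d \<le> n"
  shows "ch!(length ch - 1) = Idn_top d n"
proof -
  obtain j where j: "j < length ch" "Idn_top d n = ch!j"
    using max_chain_maximal[OF mc Idn_top_in_Idn[OF \<open>d \<le> n\<close>]] Idn_top_greatest
      max_chain_nth_in_Idn[OF mc] by blast
  have le: "bru_le (ch!(length ch - 1)) (ch!j)"
    using j Idn_top_greatest[OF max_chain_nth_in_Idn[OF mc, of "length ch - 1"]] by simp
  have "j = length ch - 1"
  proof (rule ccontr)
    assume "j \<noteq> length ch - 1"
    then have "bru_less (ch!j) (ch!(length ch - 1))" using max_chain_nth_less[OF mc] j by simp
    with le show False unfolding bru_less_def using bru_le_antisym by blast
  qed
  then show ?thesis using j by auto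
qed

lemma max_chain_between:
  assumes mc: "max_chain d n ch" and t: "t + 1 < length ch" and x: "x \<in> Idn d n"
    and lower: "bru_le (ch!t) x" and upper: "bru_le x (ch!(t+1))"
  shows "x = ch!t \<or> x = ch!(t+1)"
proof -
  have below: "bru_le (ch!j) x" if "j \<le> t" for j
    using bru_le_trans[OF max_chain_nth_le[OF mc that] lower] t by simp
  have above: "bru_le x (ch!j)" if "t < j" "j < length ch" for j
    using bru_le_trans[OF upper max_chain_nth_le[OF mc _ that(2)]] that by simp
  have "\<exists>j<length ch. x = ch!j"
  proof (rule max_chain_maximal[OF mc x])
    fix j assume "j < length ch"
    then show "bru_le x (ch!j) \<or> bru_le (ch!j) x" using below above by (cases "j \<le> t") auto
  qed
  then obtain j where j: "j < length ch" "x = ch!j" by blast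
  show ?thesis
  proof (cases "j \<le> t")
    case True
    then have "bru_le x (ch!t)" using j max_chain_nth_le[OF mc] t by simp
    then show ?thesis using lower bru_le_antisym by blast
  next
    case False
    then have "bru_le (ch!(t+1)) x" using j max_chain_nth_le[OF mc] by simp
    then show ?thesis using upper bru_le_antisym by blast
  qed
qed

text \<open>Raising the last coordinate in which a lies strictly below b keeps the sequence
  strictly increasing, since all later coordinates already agree with those of b.\<close>
lemma Idn_inc_at_below:
  assumes a: "a \<in> Idn d n" and b: "b \<in> Idn d n" and ab: "bru_less a b"
  shows "\<exists>k<d. inc_at a k \<in> Idn d n \<and> bru_le (inc_at a k) b"
proof -
  have le: "a!i \<le> b!i" if "i < d" for i
    using ab a that unfolding bru_less_def bru_le_iff_nth Idn_iff_nth by auto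
  define K where "K = {i. i < d \<and> a!i < b!i}"
  have "K \<noteq> {}"
  proof
    assume "K = {}"
    then have "a = b" using le a b unfolding K_def Idn_iff_nth
      by (metis (mono_tags, lifting) empty_Collect_eq le_neq_implies_less nth_equalityI)
    then show False using ab unfolding bru_less_def by simp
  qed
  moreover have "finite K" unfolding K_def by simp
  ultimately have "Max K \<in> K" by simp
  define k where "k = Max K"
  have kd: "k < d" and akb: "a!k < b!k" using \<open>Max K \<in> K\<close> unfolding k_def K_def by auto
  have above: "a!i = b!i" if "k < i" "i < d" for i
    using that le Max_ge[OF \<open>finite K\<close>, of i] unfolding k_def K_def by fastforce
  have len: "length a = d" "length b = d" using a b unfolding Idn_iff_nth by auto
  have nth_inc: "inc_at a k ! i = (if i = k then a!k + 1 else a!i)" for i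
    using kd len by (simp add: inc_at_def)
  have "length (inc_at a k) = d" using len by (simp add: inc_at_def)
  moreover have "1 \<le> inc_at a k ! i \<and> inc_at a k ! i \<le> n" if "i < d" for i
    using that a b akb nth_inc[of i] unfolding Idn_iff_nth by (cases "i = k") auto
  moreover have "inc_at a k ! i < inc_at a k ! Suc i" if i: "Suc i < d" for i
  proof -
    have "b!k < b!Suc k" if "i = k" using b i that unfolding Idn_iff_nth by simp
    then show ?thesis
      using a i akb above[of "Suc i"] nth_inc[of i] nth_inc[of "Suc i"] unfolding Idn_iff_nth
      by (cases "i = k"; cases "Suc i = k") auto
  qed
  ultimately have "inc_at a k \<in> Idn d n" unfolding Idn_iff_nth by blast
  moreover have "bru_le (inc_at a k) b"
    unfolding bru_le_iff_nth using len le akb nth_inc by (auto simp: inc_at_def)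
  ultimately show ?thesis using kd by blast
qed

lemma max_chain_step:
  assumes mc: "max_chain d n ch" and t: "t + 1 < length ch"
  shows "\<exists>k<d. ch!(t+1) = inc_at (ch!t) k"
proof -
  have a: "ch!t \<in> Idn d n" and b: "ch!(t+1) \<in> Idn d n"
    using max_chain_nth_in_Idn[OF mc] t by auto
  obtain k where k: "k < d" "inc_at (ch!t) k \<in> Idn d n" "bru_le (inc_at (ch!t) k) (ch!(t+1))"
    using Idn_inc_at_below[OF a b] max_chain_nth_less[OF mc, of t "t+1"] t by auto
  have len: "length (ch!t) = d" using a unfolding Idn_iff_nth by simp
  have "bru_le (ch!t) (inc_at (ch!t) k)" by (rule bru_le_inc_at)
  moreover have "inc_at (ch!t) k \<noteq> ch!t"
    using k(1) len by (metis inc_at_def lessI n_not_Suc_n nth_list_update_eq Suc_eq_plus1)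
  ultimately have "inc_at (ch!t) k = ch!(t+1)" using max_chain_between[OF mc t k(2)] k(3) by blast
  then show ?thesis using k(1) by metis
qed

definition step_pos :: "nat list list \<Rightarrow> nat \<Rightarrow> nat" where
  "step_pos ch t = (SOME k. k < length (ch!t) \<and> ch!(t+1) = inc_at (ch!t) k)"

lemma max_chain_step_pos:
  assumes "max_chain d n ch" "t + 1 < length ch"
  shows "step_pos ch t < d" "ch!(t+1) = inc_at (ch!t) (step_pos ch t)"
    "ch!t = dec_at (ch!(t+1)) (step_pos ch t)"
proof -
  have "length (ch!t) = d" using max_chain_nth_in_Idn[OF assms(1), of t] assms(2)
    unfolding Idn_iff_nth by simp
  then have "\<exists>k. k < length (ch!t) \<and> ch!(t+1) = inc_at (ch!t) k" using max_chain_step[OF assms]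
    by simp
  then have "step_pos ch t < length (ch!t) \<and> ch!(t+1) = inc_at (ch!t) (step_pos ch t)"
    unfolding step_pos_def by (rule someI_ex)
  then show "step_pos ch t < d" "ch!(t+1) = inc_at (ch!t) (step_pos ch t)"
    "ch!t = dec_at (ch!(t+1)) (step_pos ch t)"
    using \<open>length (ch!t) = d\<close> by auto
qed

lemma max_chain_sum_list:
  assumes mc: "max_chain d n ch" and "d \<le> n" and "t < length ch"
  shows "sum_list (ch!t) = sum_list (Idn_bot d) + t"
  using \<open>t < length ch\<close>
proof (induction t)
  case 0
  then show ?case using max_chain_first[OF mc \<open>d \<le> n\<close>] by simp
next
  case (Suc t)
  have "length (ch!t) = d" using max_chain_nth_in_Idn[OF mc, of t] Suc.prems unfolding Idn_iff_nth
    by simp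
  then show ?case using Suc max_chain_step_pos(1,2)[OF mc, of t] sum_list_inc_at by simp
qed

lemma max_chain_length:
  assumes mc: "max_chain d n ch" and "d \<le> n"
  shows "length ch = Suc (d * (n - d))"
proof -
  have "ch \<noteq> []" using max_chain_first[OF assms] by simp
  then have "sum_list (ch!(length ch - 1)) = sum_list (Idn_bot d) + (length ch - 1)"
    using max_chain_sum_list[OF assms] by simp
  then show ?thesis using max_chain_last[OF assms] sum_list_Idn_top[of d n] \<open>ch \<noteq> []\<close>
    by simp
qed

section \<open>Diamonds and peaks\<close>

lemma dec_at_swap_in_Idn:
  assumes y: "y \<in> Idn d n" and a: "dec_at (dec_at y p) q \<in> Idn d n"
    and pq: "p < d" "q < d" "p \<noteq> q"
    and not_adjacent: "\<not> (q = Suc p \<and> y!q = Suc (y!p))"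
  shows "dec_at y q \<in> Idn d n"
proof -
  let ?a = "dec_at (dec_at y p) q" and ?o = "dec_at y q"
  have len: "length y = d" using y unfolding Idn_iff_nth by simp
  have o_nth: "?o!i = (if i = q then y!q - 1 else y!i)" for i
    using len pq by (simp add: nth_dec_at)
  have a_nth: "?a!i = (if i = q then y!q - 1 else if i = p then y!p - 1 else y!i)" for i
    using len pq by (simp add: nth_dec_at)
  have o_a: "?o!i = ?a!i" if "i \<noteq> p" for i using that o_nth a_nth by simp
  have a_o: "?a!i \<le> ?o!i" for i using o_nth a_nth by simp
  have "1 \<le> ?o!i \<and> ?o!i \<le> n" if "i < d" for i
    using that y a a_o[of i] o_nth[of i] unfolding Idn_iff_nth by (metis diff_le_self order_trans)
  moreover have "?o!i < ?o!Suc i" if i: "Suc i < d" for i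
  proof (cases "i = p")
    case True
    have "y!p < y!Suc p" using y i True unfolding Idn_iff_nth by simp
    then show ?thesis using True not_adjacent o_nth pq(3) by auto
  next
    case False
    have "?a!i < ?a!Suc i" using a i unfolding Idn_iff_nth by simp
    then show ?thesis using False o_a a_o[of "Suc i"] by simp
  qed
  ultimately show ?thesis using len unfolding Idn_iff_nth by simp
qed

lemma bru_interval_dec_at_square:
  assumes in_Idn: "y \<in> Idn d n" "dec_at y p \<in> Idn d n" "dec_at y q \<in> Idn d n"
      "dec_at (dec_at y p) q \<in> Idn d n"
    and pq: "p < d" "q < d" "p \<noteq> q"
  shows "bru_interval d n (dec_at (dec_at y p) q) y = {dec_at (dec_at y p) q, dec_at y p, dec_at y q, y}"
proof -
  let ?a = "dec_at (dec_at y p) q"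
  have len: "length y = d" using in_Idn unfolding Idn_iff_nth by simp
  have a_nth: "?a!i = (if i = q then y!q - 1 else if i = p then y!p - 1 else y!i)" for i
    using len pq by (simp add: nth_dec_at)
  have corners: "y[p := y!p - 1, q := y!q - 1] = ?a" "y[p := y!p - 1, q := y!q] = dec_at y p"
      "y[p := y!p, q := y!q - 1] = dec_at y q" "y[p := y!p, q := y!q] = y"
    by (simp_all add: dec_at_def pq(3)) (metis list_update_id nth_list_update_neq pq(3))
  have interval_sub: "x \<in> {?a, dec_at y p, dec_at y q, y}" if x: "x \<in> bru_interval d n ?a y" for x
  proof -
    have "bru_le ?a x" "bru_le x y" using x unfolding bru_interval_def by simp_all
    then have lx: "length x = d" and ax: "\<And>i. i < d \<Longrightarrow> ?a!i \<le> x!i" and xy: "\<And>i. i < d \<Longrightarrow> x!i \<le> y!i"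
      using len unfolding bru_le_iff_nth by simp_all
    have "x!i = y!i" if "i < d" "i \<noteq> p" "i \<noteq> q" for i
      using that ax[of i] xy[of i] a_nth[of i] by simp
    then have x_upd: "x = y[p := x!p, q := x!q]"
      using lx len pq by (intro nth_equalityI) (auto simp: nth_list_update)
    have "x!p = y!p - 1 \<or> x!p = y!p" "x!q = y!q - 1 \<or> x!q = y!q"
      using ax[of p] xy[of p] ax[of q] xy[of q] a_nth[of p] a_nth[of q] pq by auto
    then have "x \<in> {y[p := u, q := v] | u v. (u = y!p - 1 \<or> u = y!p) \<and> (v = y!q - 1 \<or> v = y!q)}"
      using x_upd by blast
    also have "\<dots> \<subseteq> {?a, dec_at y p, dec_at y q, y}"
      using corners by auto
    finally show ?thesis .
  qed
  have "bru_le ?a (dec_at y p)" "bru_le (dec_at y p) y" "bru_le (dec_at y q) y"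
    by (rule bru_le_dec_at)+
  moreover have "bru_le ?a (dec_at y q)"
    unfolding dec_at_commute[OF pq(3)] by (rule bru_le_dec_at)
  ultimately have "{?a, dec_at y p, dec_at y q, y} \<subseteq> bru_interval d n ?a y"
    using in_Idn unfolding bru_interval_def by (auto intro: bru_le_trans)
  with interval_sub show ?thesis by blast
qed

lemma other_elt_eqI:
  "bru_interval d n (ch!(t-1)) (ch!(t+1)) - {ch!(t-1), ch!t, ch!(t+1)} = {x} \<Longrightarrow> other_elt d n ch t = x"
  unfolding other_elt_def by (rule the_equality) auto

text \<open>Two steps into ch!(t+1) raising different coordinates, first q = step_pos ch (t-1) and
  then p = step_pos ch t, can be swapped unless raising p first would make it collide with its
  right neighbour q = p + 1.\<close>
lemma diamond_if_steps_commute: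
  assumes mc: "max_chain d n ch" and t: "1 \<le> t" "t + 1 < length ch"
    and pq: "step_pos ch t \<noteq> step_pos ch (t-1)"
    and not_adjacent: "\<not> (step_pos ch (t-1) = Suc (step_pos ch t)
                          \<and> ch!(t+1)!step_pos ch (t-1) = Suc (ch!(t+1)!step_pos ch t))"
  shows "has_diamond d n ch t \<and> other_elt d n ch t = dec_at (ch!(t+1)) (step_pos ch (t-1))"
proof -
  define y p q where "y = ch!(t+1)" and "p = step_pos ch t" and "q = step_pos ch (t-1)"
  have p: "p < d" "ch!t = dec_at y p" using max_chain_step_pos[OF mc t(2)] unfolding p_def y_def by auto
  have q: "q < d" "ch!(t-1) = dec_at (dec_at y p) q"
    using max_chain_step_pos[OF mc, of "t-1"] t p(2) unfolding q_def by auto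
  have in_Idn: "y \<in> Idn d n" "dec_at y p \<in> Idn d n" "dec_at (dec_at y p) q \<in> Idn d n"
    using max_chain_nth_in_Idn[OF mc] t p(2) q(2) unfolding y_def
    by (metis add_lessD1 less_imp_diff_less)+
  have o_in_Idn: "dec_at y q \<in> Idn d n"
    using dec_at_swap_in_Idn[OF in_Idn(1,3) p(1) q(1)] pq not_adjacent unfolding p_def q_def y_def
    by blast
  have interval: "bru_interval d n (ch!(t-1)) (ch!(t+1)) = {dec_at (dec_at y p) q, dec_at y p, dec_at y q, y}"
    using bru_interval_dec_at_square[OF in_Idn(1,2) o_in_Idn in_Idn(3) p(1) q(1)] pq p q
    unfolding p_def q_def y_def by simp
  have len: "length y = d" using in_Idn(1) unfolding Idn_iff_nth by simp
  have "1 \<le> y!p" "1 \<le> y!q" using in_Idn(1) p(1) q(1) unfolding Idn_iff_nth by auto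
  then have "distinct [dec_at (dec_at y p) q, dec_at y p, dec_at y q, y]"
    using len p(1) q(1) pq unfolding p_def q_def
    by (auto simp: list_eq_iff_nth_eq nth_dec_at)
  then have "card (bru_interval d n (ch!(t-1)) (ch!(t+1))) = 4"
    unfolding interval by (simp add: card_insert_if)
  moreover have "other_elt d n ch t = dec_at y q"
    by (rule other_elt_eqI) (use interval p q \<open>distinct _\<close> in \<open>auto simp: y_def\<close>)
  ultimately show ?thesis using t unfolding has_diamond_def q_def y_def by simp
qed

lemma lex_less_iff_less: "lex_less xs ys \<longleftrightarrow> xs < ys"
  by (simp add: lex_less_def list_less_def)

lemma dec_at_less_dec_at:
  assumes "p < q" "q < length y" "1 \<le> y!p"
  shows "dec_at y p < dec_at y q"
proof -
  have "take p (dec_at y p) = take p (dec_at y q)" using assms by (simp add: dec_at_def)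
  moreover have "dec_at y p ! p < dec_at y q ! p" using assms by (simp add: nth_dec_at)
  ultimately have "(dec_at y p, dec_at y q) \<in> lexord {(u, v). u < v}"
    unfolding lexord_take_index_conv using assms by (auto intro!: exI[of _ p])
  then show ?thesis by (simp add: list_less_def)
qed

lemma step_pos_adjacent_if_not_right_peak:
  assumes mc: "max_chain d n ch" and t: "1 \<le> t" "t + 1 < length ch"
    and no_peak: "\<not> right_peak d n ch t" and less: "step_pos ch t < step_pos ch (t-1)"
  shows "step_pos ch (t-1) = Suc (step_pos ch t)
         \<and> ch!(t+1)!step_pos ch (t-1) = Suc (ch!(t+1)!step_pos ch t)"
proof (rule ccontr)
  assume "\<not> ?thesis"
  then have diamond: "has_diamond d n ch t"
      and other: "other_elt d n ch t = dec_at (ch!(t+1)) (step_pos ch (t-1))"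
    using diamond_if_steps_commute[OF mc t] less by auto
  have y: "ch!(t+1) \<in> Idn d n" using max_chain_nth_in_Idn[OF mc t(2)] .
  have "ch!t < other_elt d n ch t"
    using dec_at_less_dec_at[OF less] max_chain_step_pos[OF mc t(2)]
      max_chain_step_pos(1)[OF mc, of "t-1"] t y other
    unfolding Idn_iff_nth by auto
  then show False using no_peak diamond unfolding right_peak_def lex_less_iff_less by simp
qed

lemma step_pos_antimono_if_not_left_peak:
  assumes mc: "max_chain d n ch" and t: "1 \<le> t" "t + 1 < length ch"
    and no_peak: "\<not> left_peak d n ch t"
  shows "step_pos ch t \<le> step_pos ch (t-1)"
proof (rule ccontr)
  assume "\<not> ?thesis"
  then have less: "step_pos ch (t-1) < step_pos ch t" by simp
  then have diamond: "has_diamond d n ch t"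
      and other: "other_elt d n ch t = dec_at (ch!(t+1)) (step_pos ch (t-1))"
    using diamond_if_steps_commute[OF mc t] by auto
  have y: "ch!(t+1) \<in> Idn d n" using max_chain_nth_in_Idn[OF mc t(2)] .
  have "other_elt d n ch t < ch!t"
    using dec_at_less_dec_at[OF less] max_chain_step_pos[OF mc t(2)]
      max_chain_step_pos(1)[OF mc, of "t-1"] t y other
    unfolding Idn_iff_nth by auto
  then show False using no_peak diamond unfolding left_peak_def lex_less_iff_less by simp
qed

section \<open>Chains without peaks of one kind\<close>

lemma max_chain_coord_unchanged:
  assumes mc: "max_chain d n ch" and su: "s \<le> u" "u < length ch"
    and not_raised: "\<And>i. s \<le> i \<Longrightarrow> i < u \<Longrightarrow> step_pos ch i \<noteq> m"
  shows "ch!s!m = ch!u!m"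
  using su
proof (induction u rule: dec_induct)
  case (step i)
  then have "ch!Suc i = inc_at (ch!i) (step_pos ch i)" using max_chain_step_pos(2)[OF mc, of i] by simp
  then show ?case using step not_raised[of i] by (simp add: inc_at_def)
qed simp

definition lowerable :: "nat \<Rightarrow> nat \<Rightarrow> nat list \<Rightarrow> nat set" where
  "lowerable d n y = {m. m < d \<and> dec_at y m \<in> Idn d n}"

lemma step_pos_lowerable:
  assumes mc: "max_chain d n ch" and t: "t + 1 < length ch"
  shows "step_pos ch t \<in> lowerable d n (ch!(t+1))"
proof -
  have "ch!t \<in> Idn d n" using max_chain_nth_in_Idn[OF mc] t by simp
  then show ?thesis using max_chain_step_pos[OF mc t] unfolding lowerable_def by simp
qed

lemma lowerable_nth_lower:
  assumes m: "m \<in> lowerable d n y" and y: "y \<in> Idn d n"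
  shows "m + 2 \<le> y!m"
proof -
  have "m < d" "dec_at y m \<in> Idn d n" "length y = d" using m y unfolding lowerable_def Idn_iff_nth
    by auto
  then show ?thesis using Idn_nth_lower[of "dec_at y m" d n m] by (simp add: nth_dec_at)
qed

lemma lowerable_nth_gap:
  assumes m: "m \<in> lowerable d n y" and y: "y \<in> Idn d n" and "0 < m"
  shows "y!(m-1) + 1 < y!m"
proof -
  have "m < d" "dec_at y m \<in> Idn d n" "length y = d" using m y unfolding lowerable_def Idn_iff_nth
    by auto
  moreover have "Suc (m-1) = m" using \<open>0 < m\<close> by simp
  ultimately have "dec_at y m ! (m-1) < dec_at y m ! m" unfolding Idn_iff_nth by metis
  moreover have "m - 1 \<noteq> m" using \<open>0 < m\<close> by simp
  ultimately show ?thesis using \<open>m < d\<close> \<open>length y = d\<close>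
    by (simp add: nth_dec_at)
qed

text \<open>Going back in time, each step raises a coordinate at most one place right of the one
  raised next, so the raised coordinate cannot jump over m.\<close>
lemma step_pos_left_of_unraised_if_no_right_peak:
  assumes mc: "max_chain d n ch" and no_peak: "\<forall>j. \<not> right_peak d n ch j"
    and t: "t + 1 < length ch" and pm: "step_pos ch t < m"
    and unraised: "\<And>i. s < i \<Longrightarrow> i \<le> t \<Longrightarrow> step_pos ch i \<noteq> m"
    and i: "s < i" "i \<le> t"
  shows "step_pos ch i < m"
  using i(2,1)
proof (induction i rule: inc_induct)
  case base
  show ?case by (rule pm)
next
  case (step i)
  have j: "1 \<le> Suc i" "Suc i + 1 < length ch" using step.hyps t by auto
  then show ?case
    using step unraised[of i] step_pos_adjacent_if_not_right_peak[OF mc j] no_peak by fastforce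
qed

text \<open>If a coordinate m right of the lowered one could be lowered at the top, consider the
  last step s raising m: the step after it is forced and leaves coordinate m - 1 just below m,
  and since m is never raised again, it cannot be lowered at the top.\<close>
lemma lowerable_le_step_pos_if_no_right_peak:
  assumes mc: "max_chain d n ch" and "d \<le> n" and no_peak: "\<forall>j. \<not> right_peak d n ch j"
    and t: "t + 1 < length ch" and m: "m \<in> lowerable d n (ch!(t+1))"
  shows "m \<le> step_pos ch t"
proof (rule ccontr)
  assume "\<not> ?thesis"
  then have pm: "step_pos ch t < m" by simp
  define y where "y = ch!(t+1)"
  have y: "y \<in> Idn d n" using max_chain_nth_in_Idn[OF mc t] unfolding y_def .
  have "m < d" using m unfolding lowerable_def by simp
  have "ch!0!m \<noteq> y!m"
    using max_chain_first[OF mc \<open>d \<le> n\<close>] lowerable_nth_lower[OF m] y \<open>m < d\<close>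
    unfolding y_def by (simp add: Idn_bot_def)
  then have "\<exists>s. s \<le> t \<and> step_pos ch s = m"
    using max_chain_coord_unchanged[OF mc _ t, of 0 m] unfolding y_def
    by (metis Suc_eq_plus1 less_Suc_eq_le zero_le)
  then obtain s where s: "s \<le> t" "step_pos ch s = m"
    and s_last: "\<And>i. i \<le> t \<Longrightarrow> step_pos ch i = m \<Longrightarrow> i \<le> s"
    using Nat.ex_has_greatest_nat[where P = "\<lambda>s. s \<le> t \<and> step_pos ch s = m" and b = t]
    by blast
  have "s < t" using s pm by (metis le_neq_implies_less less_irrefl)
  have after_s: "step_pos ch i < m" if "s < i" "i \<le> t" for i
    by (rule step_pos_left_of_unraised_if_no_right_peak[OF mc no_peak t pm _ that])
      (use s_last in fastforce)
  define z where "z = ch!(s+2)"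
  have "step_pos ch (s+1-1) = Suc (step_pos ch (s+1))
        \<and> ch!(s+1+1)!step_pos ch (s+1-1) = Suc (ch!(s+1+1)!step_pos ch (s+1))"
    by (rule step_pos_adjacent_if_not_right_peak[OF mc])
      (use no_peak t \<open>s < t\<close> after_s[of "s+1"] s(2) in auto)
  then obtain k where "m = Suc k" "z!m = Suc (z!k)" using s(2) unfolding z_def by auto
  then have m_forced: "0 < m" "z!m = Suc (z!(m-1))" by simp_all
  have "z!m = y!m"
    unfolding z_def y_def
  proof (rule max_chain_coord_unchanged[OF mc _ t])
    show "s + 2 \<le> t + 1" using \<open>s < t\<close> by simp
    fix i assume "s + 2 \<le> i" "i < t + 1"
    then show "step_pos ch i \<noteq> m" using after_s[of i] by simp
  qed
  moreover have "z!(m-1) \<le> y!(m-1)"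
    using max_chain_nth_le[OF mc, of "s+2" "t+1"] \<open>s < t\<close> t y \<open>m < d\<close> unfolding z_def y_def
    by (simp add: bru_le_iff_nth Idn_iff_nth)
  ultimately show False using lowerable_nth_gap[OF m[folded y_def] y m_forced(1)] m_forced(2) by simp
qed

text \<open>Without left peaks, the coordinates raised along the chain never increase, so a
  coordinate left of the one lowered at the top was never raised at all.\<close>
lemma step_pos_le_lowerable_if_no_left_peak:
  assumes mc: "max_chain d n ch" and "d \<le> n" and no_peak: "\<forall>j. \<not> left_peak d n ch j"
    and t: "t + 1 < length ch" and m: "m \<in> lowerable d n (ch!(t+1))"
  shows "step_pos ch t \<le> m"
proof (rule ccontr)
  assume "\<not> ?thesis"
  then have pm: "m < step_pos ch t" by simp
  have before_t: "m < step_pos ch i" if "i \<le> t" for i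
    using that
  proof (induction i rule: inc_induct)
    case (step i)
    then show ?case
      using step_pos_antimono_if_not_left_peak[OF mc, of "Suc i"] no_peak t by fastforce
  qed (rule pm)
  have "m < d" using m unfolding lowerable_def by simp
  have "ch!0!m = ch!(t+1)!m"
  proof (rule max_chain_coord_unchanged[OF mc _ t])
    fix i assume "i < t + 1"
    then show "step_pos ch i \<noteq> m" using before_t[of i] by simp
  qed simp
  then show False
    using max_chain_first[OF mc \<open>d \<le> n\<close>] lowerable_nth_lower[OF m max_chain_nth_in_Idn[OF mc t]] \<open>m < d\<close>
    by (simp add: Idn_bot_def)
qed

lemma max_chain_nth_if_no_right_peak:
  assumes mc: "max_chain d n ch" and "d \<le> n" and no_peak: "\<forall>j. \<not> right_peak d n ch j"
    and t: "t + 1 < length ch"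
  shows "ch!t = dec_at (ch!(t+1)) (Max (lowerable d n (ch!(t+1))))"
proof -
  have "Max (lowerable d n (ch!(t+1))) = step_pos ch t"
  proof (rule Max_eqI)
    show "finite (lowerable d n (ch!(t+1)))" unfolding lowerable_def by simp
  qed (use lowerable_le_step_pos_if_no_right_peak[OF assms] step_pos_lowerable[OF mc t] in auto)
  then show ?thesis using max_chain_step_pos(3)[OF mc t] by simp
qed

lemma max_chain_nth_if_no_left_peak:
  assumes mc: "max_chain d n ch" and "d \<le> n" and no_peak: "\<forall>j. \<not> left_peak d n ch j"
    and t: "t + 1 < length ch"
  shows "ch!t = dec_at (ch!(t+1)) (Min (lowerable d n (ch!(t+1))))"
proof -
  have "Min (lowerable d n (ch!(t+1))) = step_pos ch t"
  proof (rule Min_eqI)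
    show "finite (lowerable d n (ch!(t+1)))" unfolding lowerable_def by simp
  qed (use step_pos_le_lowerable_if_no_left_peak[OF assms] step_pos_lowerable[OF mc t] in auto)
  then show ?thesis using max_chain_step_pos(3)[OF mc t] by simp
qed

lemma max_chain_unique_if_no_right_peak:
  assumes dn: "d \<le> n" and mc: "max_chain d n c1" "max_chain d n c2"
    and no_peak: "\<forall>j. \<not> right_peak d n c1 j" "\<forall>j. \<not> right_peak d n c2 j"
  shows "c1 = c2"
proof (rule list_eq_by_backward_recursion[where f = "\<lambda>y. dec_at y (Max (lowerable d n y))"])
  show "length c1 = length c2" using max_chain_length[OF mc(1) dn] max_chain_length[OF mc(2) dn] by simp
  show "c1!(length c1 - 1) = c2!(length c2 - 1)" using max_chain_last[OF mc(1) dn] max_chain_last[OF mc(2) dn]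
    by simp
  show "c1!t = dec_at (c1!(t+1)) (Max (lowerable d n (c1!(t+1))))" if "t + 1 < length c1" for t
    by (rule max_chain_nth_if_no_right_peak[OF mc(1) dn no_peak(1) that])
  show "c2!t = dec_at (c2!(t+1)) (Max (lowerable d n (c2!(t+1))))" if "t + 1 < length c2" for t
    by (rule max_chain_nth_if_no_right_peak[OF mc(2) dn no_peak(2) that])
qed

lemma max_chain_unique_if_no_left_peak:
  assumes dn: "d \<le> n" and mc: "max_chain d n c1" "max_chain d n c2"
    and no_peak: "\<forall>j. \<not> left_peak d n c1 j" "\<forall>j. \<not> left_peak d n c2 j"
  shows "c1 = c2"
proof (rule list_eq_by_backward_recursion[where f = "\<lambda>y. dec_at y (Min (lowerable d n y))"])
  show "length c1 = length c2" using max_chain_length[OF mc(1) dn] max_chain_length[OF mc(2) dn] by simp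
  show "c1!(length c1 - 1) = c2!(length c2 - 1)" using max_chain_last[OF mc(1) dn] max_chain_last[OF mc(2) dn]
    by simp
  show "c1!t = dec_at (c1!(t+1)) (Min (lowerable d n (c1!(t+1))))" if "t + 1 < length c1" for t
    by (rule max_chain_nth_if_no_left_peak[OF mc(1) dn no_peak(1) that])
  show "c2!t = dec_at (c2!(t+1)) (Min (lowerable d n (c2!(t+1))))" if "t + 1 < length c2" for t
    by (rule max_chain_nth_if_no_left_peak[OF mc(2) dn no_peak(2) that])
qed

section \<open>Moving a chain across a diamond\<close>

lemma bru_interval_diff_eq_other_elt:
  assumes mc: "max_chain d n ch" and diamond: "has_diamond d n ch t"
  shows "bru_interval d n (ch!(t-1)) (ch!(t+1)) - {ch!(t-1), ch!t, ch!(t+1)} = {other_elt d n ch t}"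
proof -
  let ?I = "bru_interval d n (ch!(t-1)) (ch!(t+1))"
  have t: "1 \<le> t" "t + 1 < length ch" and four: "card ?I = 4"
    using diamond unfolding has_diamond_def by auto
  have less: "bru_less (ch!(t-1)) (ch!t)" "bru_less (ch!t) (ch!(t+1))" "bru_less (ch!(t-1)) (ch!(t+1))"
    using max_chain_nth_less[OF mc] t by auto
  then have "{ch!(t-1), ch!t, ch!(t+1)} \<subseteq> ?I"
    using max_chain_nth_in_Idn[OF mc] t unfolding bru_interval_def bru_less_def by auto
  moreover have "card {ch!(t-1), ch!t, ch!(t+1)} = 3" using less unfolding bru_less_def by auto
  moreover have "finite ?I" using finite_Idn unfolding bru_interval_def by simp
  ultimately have "card (?I - {ch!(t-1), ch!t, ch!(t+1)}) = 1" using four by (simp add: card_Diff_subset)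
  then obtain x where x: "?I - {ch!(t-1), ch!t, ch!(t+1)} = {x}" by (rule card_1_singletonE)
  then show ?thesis using other_elt_eqI[OF x] by simp
qed

lemma other_elt_incomparable:
  assumes mc: "max_chain d n ch" and diamond: "has_diamond d n ch t"
  shows "\<not> bru_le (other_elt d n ch t) (ch!t)" "\<not> bru_le (ch!t) (other_elt d n ch t)"
proof -
  let ?o = "other_elt d n ch t"
  have t: "1 \<le> t" "t + 1 < length ch" using diamond unfolding has_diamond_def by auto
  have o: "?o \<in> Idn d n" "bru_le (ch!(t-1)) ?o" "bru_le ?o (ch!(t+1))" "?o \<notin> {ch!(t-1), ch!t, ch!(t+1)}"
    using bru_interval_diff_eq_other_elt[OF assms] unfolding bru_interval_def by auto
  show "\<not> bru_le ?o (ch!t)"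
    using max_chain_between[OF mc, of "t-1" ?o] o t by auto
  show "\<not> bru_le (ch!t) ?o"
    using max_chain_between[OF mc, of t ?o] o t by auto
qed

text \<open>An element comparable with the whole new chain is either comparable with ch!t, and then
  lies on the old chain, or it lies strictly inside the diamond.\<close>
lemma max_chain_update_other_elt_maximal:
  assumes mc: "max_chain d n ch" and diamond: "has_diamond d n ch t" and x: "x \<in> Idn d n"
    and comparable: "\<forall>y\<in>set (ch[t := other_elt d n ch t]). bru_le x y \<or> bru_le y x"
  shows "x \<in> set (ch[t := other_elt d n ch t])"
proof -
  let ?a = "ch!(t-1)" and ?c = "ch!t" and ?b = "ch!(t+1)" and ?o = "other_elt d n ch t"
  let ?ch = "ch[t := ?o]"
  have t: "1 \<le> t" "t + 1 < length ch" using diamond unfolding has_diamond_def by auto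
  have in_set: "ch!i \<in> set ?ch" if "i < length ch" "i \<noteq> t" for i
    using that by (metis length_list_update nth_list_update_neq nth_mem)
  have o_in_set: "?o \<in> set ?ch" using t by (simp add: set_update_memI)
  show ?thesis
  proof (cases "bru_le x ?c \<or> bru_le ?c x")
    case True
    have "\<exists>j<length ch. x = ch!j"
    proof (rule max_chain_maximal[OF mc x])
      fix j assume "j < length ch"
      then show "bru_le x (ch!j) \<or> bru_le (ch!j) x" using True comparable in_set
        by (cases "j = t") auto
    qed
    then obtain j where j: "j < length ch" "x = ch!j" by blast
    moreover have "j \<noteq> t"
    proof
      assume "j = t"
      then show False using j comparable o_in_set other_elt_incomparable[OF mc diamond] by auto
    qed
    ultimately show ?thesis using in_set by simp
  next
    case False
    have "bru_le ?a ?c" "bru_le ?c ?b" using max_chain_nth_le[OF mc] t by auto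
    moreover have "bru_le x ?a \<or> bru_le ?a x" "bru_le x ?b \<or> bru_le ?b x"
      using comparable in_set[of "t-1"] in_set[of "t+1"] t by auto
    ultimately have "bru_le ?a x" "bru_le x ?b" using False bru_le_trans by metis+
    then have "x \<in> bru_interval d n ?a ?b" using x unfolding bru_interval_def by simp
    moreover have "x \<noteq> ?c" using False by auto
    ultimately have "x \<in> {?a, ?b, ?o}" using bru_interval_diff_eq_other_elt[OF mc diamond] by blast
    then show ?thesis using in_set[of "t-1"] in_set[of "t+1"] o_in_set t by auto
  qed
qed

lemma max_chain_update_other_elt:
  assumes mc: "max_chain d n ch" and diamond: "has_diamond d n ch t"
  shows "max_chain d n (ch[t := other_elt d n ch t])"
proof -
  let ?o = "other_elt d n ch t"
  have t: "1 \<le> t" "t + 1 < length ch" using diamond unfolding has_diamond_def by auto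
  have o: "?o \<in> Idn d n" "bru_le (ch!(t-1)) ?o" "bru_le ?o (ch!(t+1))" "?o \<notin> {ch!(t-1), ch!(t+1)}"
    using bru_interval_diff_eq_other_elt[OF assms] unfolding bru_interval_def by auto
  have "set (ch[t := ?o]) \<subseteq> Idn d n"
    using mc o(1) set_update_subset_insert[of ch t ?o] unfolding max_chain_def by auto
  moreover have "sorted_wrt bru_less (ch[t := ?o])"
    using mc o t transp_bru_less unfolding max_chain_def bru_less_def
    by (intro sorted_wrt_list_update) auto
  ultimately show ?thesis
    unfolding max_chain_def using max_chain_update_other_elt_maximal[OF assms] by blast
qed

lemma chain_string_list_update_less:
  assumes "t < length ch" "u < v" "length u = length v"
  shows "chain_string (ch[t := u]) < chain_string (ch[t := v])"
proof -
  have split: "chain_string (ch[t := w]) = concat (rev (drop (Suc t) ch)) @ w @ concat (rev (take t ch))" for w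
    unfolding chain_string_def using assms(1) by (simp add: upd_conv_take_nth_drop)
  have "(u, v) \<in> lexord {(a, b). a < b}" using assms(2) by (simp add: list_less_def)
  then have "(u @ concat (rev (take t ch)), v @ concat (rev (take t ch))) \<in> lexord {(a, b). a < b}"
    using assms(3) by (intro lexord_sufI) auto
  then show ?thesis unfolding split list_less_def by (rule lexord_append_leftI)
qed

lemma length_other_elt:
  assumes mc: "max_chain d n ch" and diamond: "has_diamond d n ch t"
  shows "length (other_elt d n ch t) = length (ch!t)"
proof -
  have "other_elt d n ch t \<in> Idn d n"
    using bru_interval_diff_eq_other_elt[OF assms] unfolding bru_interval_def by auto
  moreover have "ch!t \<in> Idn d n" using max_chain_nth_in_Idn[OF mc] diamond unfolding has_diamond_def
    by simp
  ultimately show ?thesis unfolding Idn_def by simp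
qed

lemma right_peak_update:
  assumes mc: "max_chain d n ch" and peak: "right_peak d n ch t"
  shows "max_chain d n (ch[t := other_elt d n ch t])"
    and "chain_string ch < chain_string (ch[t := other_elt d n ch t])"
proof -
  have diamond: "has_diamond d n ch t" and less: "ch!t < other_elt d n ch t"
    using peak unfolding right_peak_def lex_less_iff_less by auto
  show "max_chain d n (ch[t := other_elt d n ch t])" by (rule max_chain_update_other_elt[OF mc diamond])
  have "t < length ch" using diamond unfolding has_diamond_def by simp
  from chain_string_list_update_less[OF this less] length_other_elt[OF mc diamond]
  show "chain_string ch < chain_string (ch[t := other_elt d n ch t])" by simp
qed

lemma left_peak_update:
  assumes mc: "max_chain d n ch" and peak: "left_peak d n ch t"
  shows "max_chain d n (ch[t := other_elt d n ch t])"
    and "chain_string (ch[t := other_elt d n ch t]) < chain_string ch"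
proof -
  have diamond: "has_diamond d n ch t" and less: "other_elt d n ch t < ch!t"
    using peak unfolding left_peak_def lex_less_iff_less by auto
  show "max_chain d n (ch[t := other_elt d n ch t])" by (rule max_chain_update_other_elt[OF mc diamond])
  have "t < length ch" using diamond unfolding has_diamond_def by simp
  from chain_string_list_update_less[OF this less] length_other_elt[OF mc diamond]
  show "chain_string (ch[t := other_elt d n ch t]) < chain_string ch" by simp
qed

section \<open>The lexicographically extremal chains\<close>

lemma finite_max_chains: "d \<le> n \<Longrightarrow> finite {ch. max_chain d n ch}"
proof (rule finite_subset)
  assume "d \<le> n"
  then show "{ch. max_chain d n ch} \<subseteq> {xs. set xs \<subseteq> Idn d n \<and> length xs \<le> Suc (d * (n - d))}"
    using max_chain_length unfolding max_chain_def by fastforce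
qed (rule finite_lists_length_le[OF finite_Idn])

lemma inj_on_chain_string: "d \<le> n \<Longrightarrow> inj_on chain_string {ch. max_chain d n ch}"
proof (rule inj_onI)
  fix c1 c2 assume "d \<le> n" "c1 \<in> {ch. max_chain d n ch}" "c2 \<in> {ch. max_chain d n ch}"
    and "chain_string c1 = chain_string c2"
  then have len: "length (rev c1) = length (rev c2)" and blocks: "\<forall>x\<in>set c1 \<union> set c2. length x = d"
    and "concat (rev c1) = concat (rev c2)"
    using max_chain_length unfolding max_chain_def Idn_def chain_string_def by auto
  moreover have "length a = length b" if "(a, b) \<in> set (zip (rev c1) (rev c2))" for a b
    using blocks set_zip_leftD[OF that] set_zip_rightD[OF that] by simp
  ultimately have "rev c1 = rev c2" by (intro concat_injective) auto
  then show "c1 = c2" by simp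
qed

lemma C_left_greatest:
  assumes "d \<le> n" "max_chain d n ch"
  shows "max_chain d n (C_left d n)"
    and "\<And>c. max_chain d n c \<Longrightarrow> c \<noteq> C_left d n \<Longrightarrow> chain_string c < chain_string (C_left d n)"
proof -
  have "{c. max_chain d n c} \<noteq> {}" using assms(2) by blast
  from theI'[OF ex1_greatest_key[OF finite_max_chains[OF assms(1)] this inj_on_chain_string[OF assms(1)]]]
  show "max_chain d n (C_left d n)"
    and "\<And>c. max_chain d n c \<Longrightarrow> c \<noteq> C_left d n \<Longrightarrow> chain_string c < chain_string (C_left d n)"
    unfolding C_left_def lex_less_iff_less by simp_all
qed

lemma C_right_least:
  assumes "d \<le> n" "max_chain d n ch"
  shows "max_chain d n (C_right d n)"
    and "\<And>c. max_chain d n c \<Longrightarrow> c \<noteq> C_right d n \<Longrightarrow> chain_string (C_right d n) < chain_string c"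
proof -
  have "{c. max_chain d n c} \<noteq> {}" using assms(2) by blast
  from theI'[OF ex1_least_key[OF finite_max_chains[OF assms(1)] this inj_on_chain_string[OF assms(1)]]]
  show "max_chain d n (C_right d n)"
    and "\<And>c. max_chain d n c \<Longrightarrow> c \<noteq> C_right d n \<Longrightarrow> chain_string (C_right d n) < chain_string c"
    unfolding C_right_def lex_less_iff_less by simp_all
qed

lemma eq_C_left_if_no_right_peak:
  assumes "d \<le> n" "max_chain d n ch" "\<forall>t. \<not> right_peak d n ch t"
  shows "ch = C_left d n"
proof (rule max_chain_unique_if_no_right_peak[OF assms(1,2) C_left_greatest(1)[OF assms(1,2)] assms(3)])
  show "\<forall>t. \<not> right_peak d n (C_left d n) t"
  proof (intro allI notI)
    fix t assume "right_peak d n (C_left d n) t"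
    from right_peak_update[OF C_left_greatest(1)[OF assms(1,2)] this]
      C_left_greatest(2)[OF assms(1,2)]
    show False by (metis order.asym)
  qed
qed

lemma eq_C_right_if_no_left_peak:
  assumes "d \<le> n" "max_chain d n ch" "\<forall>t. \<not> left_peak d n ch t"
  shows "ch = C_right d n"
proof (rule max_chain_unique_if_no_left_peak[OF assms(1,2) C_right_least(1)[OF assms(1,2)] assms(3)])
  show "\<forall>t. \<not> left_peak d n (C_right d n) t"
  proof (intro allI notI)
    fix t assume "left_peak d n (C_right d n) t"
    from left_peak_update[OF C_right_least(1)[OF assms(1,2)] this]
      C_right_least(2)[OF assms(1,2)]
    show False by (metis order.asym)
  qed
qed

lemma F_op_reaches_C_left:
  assumes "d \<le> n" "max_chain d n ch"
  shows "\<exists>ts. foldr (F_op d n) ts (Some ch) = Some (C_left d n)"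
proof (rule foldr_reaches_sink[where P = "max_chain d n"
    and h = "\<lambda>c. card {c'. max_chain d n c' \<and> chain_string c < chain_string c'}"])
  fix c t c' assume mc: "max_chain d n c" and "F_op d n t (Some c) = Some c'"
  then have peak: "right_peak d n c t" and c': "c' = c[t := other_elt d n c t]"
    by (auto split: if_splits)
  have "{c''. max_chain d n c'' \<and> chain_string c' < chain_string c''}
        \<subset> {c''. max_chain d n c'' \<and> chain_string c < chain_string c''}"
    using right_peak_update[OF mc peak] unfolding c'[symmetric] by auto
  then show "max_chain d n c' \<and> card {c''. max_chain d n c'' \<and> chain_string c' < chain_string c''}
             < card {c''. max_chain d n c'' \<and> chain_string c < chain_string c''}"
    using right_peak_update(1)[OF mc peak] c' finite_max_chains[OF assms(1)]
    by (auto intro: psubset_card_mono rev_finite_subset)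
next
  fix c assume "max_chain d n c" "\<And>t. F_op d n t (Some c) = None"
  then show "c = C_left d n"
    using eq_C_left_if_no_right_peak[OF assms(1)] by (metis F_op.simps(2) option.distinct(1))
qed (rule assms(2))

lemma E_op_reaches_C_right:
  assumes "d \<le> n" "max_chain d n ch"
  shows "\<exists>ts. foldr (E_op d n) ts (Some ch) = Some (C_right d n)"
proof (rule foldr_reaches_sink[where P = "max_chain d n"
    and h = "\<lambda>c. card {c'. max_chain d n c' \<and> chain_string c' < chain_string c}"])
  fix c t c' assume mc: "max_chain d n c" and "E_op d n t (Some c) = Some c'"
  then have peak: "left_peak d n c t" and c': "c' = c[t := other_elt d n c t]"
    by (auto split: if_splits)
  have "{c''. max_chain d n c'' \<and> chain_string c'' < chain_string c'}
        \<subset> {c''. max_chain d n c'' \<and> chain_string c'' < chain_string c}"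
    using left_peak_update[OF mc peak] unfolding c'[symmetric] by auto
  then show "max_chain d n c' \<and> card {c''. max_chain d n c'' \<and> chain_string c'' < chain_string c'}
             < card {c''. max_chain d n c'' \<and> chain_string c'' < chain_string c}"
    using left_peak_update(1)[OF mc peak] c' finite_max_chains[OF assms(1)]
    by (auto intro: psubset_card_mono rev_finite_subset)
next
  fix c assume "max_chain d n c" "\<And>t. E_op d n t (Some c) = None"
  then show "c = C_right d n"
    using eq_C_right_if_no_left_peak[OF assms(1)] by (metis E_op.simps(2) option.distinct(1))
qed (rule assms(2))

lemma peak_index_bounds:
  "right_peak d n ch t \<or> left_peak d n ch t \<Longrightarrow> 1 \<le> t \<and> t + 1 < length ch"
  unfolding right_peak_def left_peak_def has_diamond_def by auto

theorem corollary2p30: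
  fixes d n r :: nat and ch :: "nat list list"
  assumes "1 \<le> d" and "d < n" and "r = d * (n - d)" and "max_chain d n ch"
  shows "((\<forall>t. 1 \<le> t \<and> t \<le> r - 1 \<longrightarrow> F_op d n t (Some ch) = None) \<longrightarrow> ch = C_left d n)
       \<and> (\<exists>ts. foldr (F_op d n) ts (Some ch) = Some (C_left d n))
       \<and> ((\<forall>t. 1 \<le> t \<and> t \<le> r - 1 \<longrightarrow> E_op d n t (Some ch) = None) \<longrightarrow> ch = C_right d n)
       \<and> (\<exists>ts. foldr (E_op d n) ts (Some ch) = Some (C_right d n))"
proof -
  have dn: "d \<le> n" using assms(2) by simp
  have peak_le: "1 \<le> t \<and> t \<le> r - 1" if "right_peak d n ch t \<or> left_peak d n ch t" for t
    using peak_index_bounds[OF that] max_chain_length[OF assms(4) dn] assms(3) by arith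
  have "ch = C_left d n" if "\<forall>t. 1 \<le> t \<and> t \<le> r - 1 \<longrightarrow> F_op d n t (Some ch) = None"
    using that peak_le eq_C_left_if_no_right_peak[OF dn assms(4)] by fastforce
  moreover have "ch = C_right d n" if "\<forall>t. 1 \<le> t \<and> t \<le> r - 1 \<longrightarrow> E_op d n t (Some ch) = None"
    using that peak_le eq_C_right_if_no_left_peak[OF dn assms(4)] by fastforce
  ultimately show ?thesis
    using F_op_reaches_C_left[OF dn assms(4)] E_op_reaches_C_right[OF dn assms(4)] by blast
qed

end
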